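(* There exist an odd integer $m\ge 3$, a positive integer $n$, and a nonzero, non-symmetric tensor $\mathbb{A}\in T_{m,n}$ that is a $P_0$ tensor.
   Context: $T_{m,n}$ denotes the set of real $m$th order $n$-dimensional tensors $\mathbb{A}=(a_{i_1i_2\ldots i_m})$ with $i_j\in[n]=\{1,\ldots,n\}$. A tensor is symmetric if its entries are invariant under any permutation of the indices. For $x\in\mathbb{R}^n$, $(\mathbb{A}x^{m-1})_i=\sum_{i_2,\ldots,i_m=1}^n a_{ii_2\ldots i_m}x_{i_2}\cdots x_{i_m}$, $i\in[n]$. A tensor $\mathbb{A}\in T_{m,n}$ is a $P_0$ tensor if for every nonzero $x\in\mathbb{R}^n$ there exists $i\in[n]$ with $x_i\neq 0$ and $x_i(\mathbb{A}x^{m-1})_i\ge 0$. *)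

theory Defs
  imports Complex_Main "HOL-Library.Multiset"
begin

text \<open>A real tensor of order m and dimension n is represented as a function from
  index lists to reals; only lists of length m with entries in [n] = {1..n} are relevant.\<close>

definition tensor_indices :: "nat \<Rightarrow> nat \<Rightarrow> nat list set" where
  "tensor_indices m n = {is. length is = m \<and> set is \<subseteq> {1..n}}"

definition tensor_nonzero :: "nat \<Rightarrow> nat \<Rightarrow> (nat list \<Rightarrow> real) \<Rightarrow> bool" where
  "tensor_nonzero m n A \<longleftrightarrow> (\<exists>is \<in> tensor_indices m n. A is \<noteq> 0)"

definition tensor_symmetric :: "nat \<Rightarrow> nat \<Rightarrow> (nat list \<Rightarrow> real) \<Rightarrow> bool" where
  "tensor_symmetric m n A \<longleftrightarrow>
     (\<forall>is \<in> tensor_indices m n. \<forall>js. mset js = mset is \<longrightarrow> A js = A is)"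

definition tensor_apply :: "nat \<Rightarrow> nat \<Rightarrow> (nat list \<Rightarrow> real) \<Rightarrow> (nat \<Rightarrow> real) \<Rightarrow> nat \<Rightarrow> real" where
  "tensor_apply m n A x i =
     (\<Sum>js \<in> tensor_indices (m - 1) n. A (i # js) * (\<Prod>k<length js. x (js ! k)))"

definition P0_tensor :: "nat \<Rightarrow> nat \<Rightarrow> (nat list \<Rightarrow> real) \<Rightarrow> bool" where
  "P0_tensor m n A \<longleftrightarrow>
     (\<forall>x :: nat \<Rightarrow> real. (\<exists>i\<in>{1..n}. x i \<noteq> 0) \<longrightarrow>
        (\<exists>i\<in>{1..n}. x i \<noteq> 0 \<and> x i * tensor_apply m n A x i \<ge> 0))"

end

theory Submission
  imports Defs
begin

text \<open>The witness is a tensor with a single nonzero entry \<open>a\<^sub>i\<^sub>j\<^sub>2\<^sub>\<dots>\<^sub>j\<^sub>m\<close>, where some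
  \<open>j\<^sub>k \<noteq> i\<close>. Then \<open>\<A>x\<^sup>m\<^sup>-\<^sup>1\<close> vanishes outside row \<open>i\<close>, so any nonzero \<open>x\<^sub>k\<close> with \<open>k \<noteq> i\<close>
  witnesses the \<open>P\<^sub>0\<close> condition; if \<open>x\<close> is supported on \<open>i\<close> alone, the factor \<open>x\<^sub>j\<^sub>k\<close> of
  row \<open>i\<close> vanishes. Moving \<open>j\<^sub>k\<close> to the front permutes the index onto a zero entry,
  so the tensor is not symmetric.\<close>

definition single_entry_tensor :: "nat list \<Rightarrow> real \<Rightarrow> nat list \<Rightarrow> real" where
  "single_entry_tensor is c = (\<lambda>ks. if ks = is then c else 0)"

lemma finite_tensor_indices: "finite (tensor_indices m n)"
proof -
  have "tensor_indices m n = {is. set is \<subseteq> {1..n} \<and> length is = m}"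
    by (auto simp: tensor_indices_def)
  then show ?thesis
    by (simp add: finite_lists_length_eq)
qed

lemma tensor_apply_single_entry:
  assumes "js \<in> tensor_indices (m - 1) n"
  shows "tensor_apply m n (single_entry_tensor (i # js) c) x k =
           (if k = i then c * (\<Prod>l<length js. x (js ! l)) else 0)"
proof -
  have "tensor_apply m n (single_entry_tensor (i # js) c) x k =
          (\<Sum>ks \<in> tensor_indices (m - 1) n.
             if ks = js \<and> k = i then c * (\<Prod>l<length ks. x (ks ! l)) else 0)"
    unfolding tensor_apply_def single_entry_tensor_def by (rule sum.cong) auto
  also have "\<dots> = (if k = i then c * (\<Prod>l<length js. x (js ! l)) else 0)"
    using assms by (simp add: finite_tensor_indices)
  finally show ?thesis .
qed

lemma tensor_nonzero_single_entry:
  assumes "is \<in> tensor_indices m n" and "c \<noteq> 0"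
  shows "tensor_nonzero m n (single_entry_tensor is c)"
  using assms unfolding tensor_nonzero_def single_entry_tensor_def by auto

lemma not_tensor_symmetric_single_entry:
  assumes "i # js \<in> tensor_indices m n" and "c \<noteq> 0"
    and "j \<in> set js" and "j \<noteq> i"
  shows "\<not> tensor_symmetric m n (single_entry_tensor (i # js) c)"
proof
  assume sym: "tensor_symmetric m n (single_entry_tensor (i # js) c)"
  have "mset (j # remove1 j (i # js)) = mset (i # js)"
    using assms(3) by simp
  with sym assms(1) have "single_entry_tensor (i # js) c (j # remove1 j (i # js)) = c"
    unfolding tensor_symmetric_def single_entry_tensor_def by fastforce
  with assms(2,4) show False
    by (simp add: single_entry_tensor_def)
qed

lemma P0_tensor_single_entry:
  assumes "js \<in> tensor_indices (m - 1) n"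
    and "j \<in> set js" and "j \<noteq> i"
  shows "P0_tensor m n (single_entry_tensor (i # js) c)"
  unfolding P0_tensor_def
proof (intro allI impI)
  fix x :: "nat \<Rightarrow> real"
  assume "\<exists>k\<in>{1..n}. x k \<noteq> 0"
  then obtain k where k: "k \<in> {1..n}" "x k \<noteq> 0" by blast
  show "\<exists>k\<in>{1..n}. x k \<noteq> 0 \<and> 0 \<le> x k * tensor_apply m n (single_entry_tensor (i # js) c) x k"
  proof (cases "\<exists>k'\<in>{1..n}. k' \<noteq> i \<and> x k' \<noteq> 0")
    case True
    then show ?thesis
      using assms(1) by (auto simp: tensor_apply_single_entry)
  next
    case False
    have "j \<in> {1..n}"
      using assms(1,2) by (auto simp: tensor_indices_def)
    with False assms(3) have "x j = 0" by blast
    then have "(\<Prod>l<length js. x (js ! l)) = 0"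
      using assms(2) by (auto simp: in_set_conv_nth intro: prod_zero)
    then have "tensor_apply m n (single_entry_tensor (i # js) c) x k = 0"
      by (simp add: tensor_apply_single_entry[OF assms(1)])
    with k show ?thesis by auto
  qed
qed

theorem proposition2p3:
  shows "\<exists>(m::nat) (n::nat) (A :: nat list \<Rightarrow> real).
           odd m \<and> m \<ge> 3 \<and> n \<ge> 1 \<and> tensor_nonzero m n A \<and>
           \<not> tensor_symmetric m n A \<and> P0_tensor m n A"
proof -
  let ?A = "single_entry_tensor [1, 2, 2] 1"
  have "[2, 2] \<in> tensor_indices 2 2" and "[1, 2, 2] \<in> tensor_indices 3 2"
    by (auto simp: tensor_indices_def)
  then have "tensor_nonzero 3 2 ?A" "\<not> tensor_symmetric 3 2 ?A" "P0_tensor 3 2 ?A"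
    by (simp_all add: tensor_nonzero_single_entry not_tensor_symmetric_single_entry
        P0_tensor_single_entry)
  then show ?thesis
    by (intro exI[of _ 3] exI[of _ 2] exI[of _ ?A]) simp
qed

end
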